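(* Let $d\ge 1$, $\mu\ge 0$ and $K\ge 2$ be integers, let $T$ be a scalar, and use the convention $0^0=1$. For each $j\in\{0,1,\ldots,K-2\}$ let vectors (all in a common vector space) $\Lambda_j^{(p)}$, $p=0,1,\ldots,d$, and $N_{l,j}$, $l=j+1,\ldots,j+\mu+1$, be given, with $N_{j+\mu+1,j}=\Lambda_j^{(0)}$. For integers $l$ and $k\ge 0$ define the local coefficient of time interval $l$ after processing the intervals $0,\ldots,k$ by $$\mathbf{L}_l^{[k]}:=\sum_{\substack{0\le j\le k\\ l-\mu-1\le j\le l-1}} N_{l,j}\;+\;\sum_{\substack{0\le j\le k\\ j\le l-\mu-2}}\ \sum_{p=0}^d \Lambda_j^{(p)}\,(l-j-\mu-1)^p\,T^p .$$ For $k\ge -1$, $p\in\{1,\ldots,d\}$ and $m\ge 0$ define $$\mathbf{L}^{(p)}_{k+\mu+1}:=\sum_{l=0}^{k}\Lambda_l^{(p)}\big((k+1-l)^p-(k-l)^p\big),\qquad \mathbf{L}^{(p,m)}_{k+\mu+1}:=\sum_{l=0}^{k}\Lambda_l^{(p)}\,l^m,$$ (empty sums, e.g. for $k=-1$, being $0$), and $$c_m^p(k):=\binom{p}{m}\Big((k-1)^{p-m}-2k^{p-m}+(k+1)^{p-m}\Big)(-1)^m .$$ Then for every $k\in\{0,1,\ldots,K-2\}$: (i) $\mathbf{L}_{k+\mu+2}^{[k]}=\mathbf{L}_{k+\mu+1}^{[k]}+\sum_{p=1}^d \mathbf{L}^{(p)}_{k+\mu+1}T^p$; (ii) for $p=1,\ldots,d$,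 $\mathbf{L}^{(p)}_{k+\mu+1}=\mathbf{L}^{(p)}_{(k-1)+\mu+1}+\Lambda_k^{(p)}+\sum_{m=0}^{p-2}c_m^p(k)\,\mathbf{L}^{(p,m)}_{(k-1)+\mu+1}$; (iii) for $p=2,\ldots,d$ and $m=0,\ldots,p-2$, $\mathbf{L}^{(p,m)}_{k+\mu+1}=\mathbf{L}^{(p,m)}_{(k-1)+\mu+1}+\Lambda_k^{(p)}\,k^m$. Consequently the local coefficients can be computed with a number of operations per time interval independent of $k$, i.e. with total cost $O(K)$.
   Context: This formalizes the multipole-to-local (M2L) translation of a space-time fast multipole method for a wave-type kernel $U(\mathbf{x},\mathbf{y},t,s)=(c(t-s)-r)_+^d/r$, $r=|\mathbf{x}-\mathbf{y}|$, with time axis split into intervals $I_0,\ldots,I_{K-1}$ of length $2h_t$ and $T=c\cdot 2h_t$. In the paper, $N_{l,j}=\mathbf{U}_{l,j}\mathbf{M}_j$ is the near-future M2L contribution of the moment $\mathbf{M}_j$ of interval $I_j$ to the local coefficient of interval $I_l$ ($j+1\le l\le j+\mu+1$), and $\Lambda_j^{(p)}=\mathbf{L}^{(p)}_{j+\mu+1,j}=\mathbf{U}^{(p)}_{j+\mu+1,j}\mathbf{M}_j$ is the contribution of $\mathbf{M}_j$ to the $p$th Taylor (binomial) coefficient of the kernel expanded at interval $I_{j+\mu+1}$, where $\mathbf{U}^{(p)}$ is the matrix of $\frac{1}{c^p p!}\partial_t^p U$ at the interpolation nodes and $\mathbf{U}^{(0)}_{l,j}=\mathbf{U}_{l,j}$;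 the distant-future contribution of $I_j$ to $I_l$, $l\ge j+\mu+2$, is $\sum_{p=0}^d\Lambda_j^{(p)}(l-j-\mu-1)^pT^p$. $\mathbf{L}^{(p)}_{k+\mu+1}$ is called the derivative of local coefficient and $\mathbf{L}^{(p,m)}_{k+\mu+1}$ the auxiliary local coefficient. *)

theory Defs
  imports Complex_Main
begin

text \<open>Data: N l j is N_{l,j}; Lam j p is Lambda_j^(p). Vectors live in a real vector space.\<close>

text \<open>Local coefficient L_l^[k] (l, k naturals; only nonnegative l are needed).\<close>
definition loc_coeff ::
  "(nat \<Rightarrow> nat \<Rightarrow> 'v::real_vector) \<Rightarrow> (nat \<Rightarrow> nat \<Rightarrow> 'v) \<Rightarrow> nat \<Rightarrow> nat \<Rightarrow> real \<Rightarrow> nat \<Rightarrow> nat \<Rightarrow> 'v"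
  where "loc_coeff N Lam \<mu> d T l k =
    (\<Sum>j\<in>{j. j \<le> k \<and> int l - int \<mu> - 1 \<le> int j \<and> int j \<le> int l - 1}. N l j)
    + (\<Sum>j\<in>{j. j \<le> k \<and> int j \<le> int l - int \<mu> - 2}.
         \<Sum>p\<le>d. ((of_int (int l - int j - int \<mu> - 1)) ^ p * T ^ p) *\<^sub>R Lam j p)"

text \<open>Derivative of local coefficient L^(p)_{k+mu+1}, for integer k \<ge> -1 (empty sum for k = -1).\<close>
definition deriv_loc :: "(nat \<Rightarrow> nat \<Rightarrow> 'v::real_vector) \<Rightarrow> nat \<Rightarrow> int \<Rightarrow> 'v"
  where "deriv_loc Lam p k =
    (\<Sum>l<nat (k + 1). ((of_int (k + 1 - int l)) ^ p - (of_int (k - int l)) ^ p) *\<^sub>R Lam l p)"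

text \<open>Auxiliary local coefficient L^(p,m)_{k+mu+1}, for integer k \<ge> -1.\<close>
definition aux_loc :: "(nat \<Rightarrow> nat \<Rightarrow> 'v::real_vector) \<Rightarrow> nat \<Rightarrow> nat \<Rightarrow> int \<Rightarrow> 'v"
  where "aux_loc Lam p m k = (\<Sum>l<nat (k + 1). (real l ^ m) *\<^sub>R Lam l p)"

definition cmp :: "nat \<Rightarrow> nat \<Rightarrow> nat \<Rightarrow> real"
  where "cmp p m k = real (p choose m) *
    ((real k - 1) ^ (p - m) - 2 * real k ^ (p - m) + (real k + 1) ^ (p - m)) * (-1) ^ m"

end

theory Submission
  imports Defs
begin

text \<open>
  At interval k + \<mu> + 2 every j \<le> k contributes through the distant-future formula; at
  k + \<mu> + 1 so does every j < k, and the single near-future term N(k + \<mu> + 1, k) = \<Lambda>(k, 0)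
  is that formula for j = k, read with 0^0 = 1. Both local coefficients are therefore sums of
  \<Lambda>(l, p) T^p times (k + 1 - l)^p resp. (k - l)^p, and their difference is the sum of the
  T^p L^(p). Passing from k - 1 to k in L^(p) produces the second differences
  (k + 1 - l)^p - 2 (k - l)^p + (k - 1 - l)^p. Expanded binomially in l, their coefficients are
  the c(p, m, k), and those of l^(p - 1) and l^p vanish because second differences annihilate
  polynomials of degree at most one in k; what remains are the auxiliary coefficients L^(p,m).
\<close>

lemma power_diff_binomial:
  fixes a y :: "'a::comm_ring_1"
  shows "(a - y) ^ p = (\<Sum>m\<le>p. of_nat (p choose m) * (- 1) ^ m * y ^ m * a ^ (p - m))"
proof -
  have "(a - y) ^ p = (- y + a) ^ p" by simp
  also have "\<dots> = (\<Sum>m\<le>p. of_nat (p choose m) * (- y) ^ m * a ^ (p - m))"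
    by (rule binomial_ring)
  finally show ?thesis by (simp add: power_minus[of y] mult.assoc)
qed

lemma second_difference_power_expansion:
  fixes x y :: "'a::comm_ring_1"
  assumes "p \<ge> 1"
  shows "(x + 1 - y) ^ p - 2 * (x - y) ^ p + (x - 1 - y) ^ p =
    (\<Sum>m<p - 1. of_nat (p choose m) * ((x - 1) ^ (p - m) - 2 * x ^ (p - m) + (x + 1) ^ (p - m))
                * (- 1) ^ m * y ^ m)"
proof -
  obtain q where q: "p = Suc q" using assms by (cases p) auto
  define c where "c m = of_nat (p choose m) * ((x - 1) ^ (p - m) - 2 * x ^ (p - m) + (x + 1) ^ (p - m))
                * (- 1) ^ m * y ^ m" for m
  have c_top_vanish: "c q = 0" "c p = 0"
    by (simp_all add: c_def q)
  have "(x + 1 - y) ^ p - 2 * (x - y) ^ p + (x - 1 - y) ^ p = (\<Sum>m\<le>p. c m)"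
    unfolding power_diff_binomial[of "x + 1" y p] power_diff_binomial[of x y p]
      power_diff_binomial[of "x - 1" y p] c_def sum_distrib_left sum_subtractf[symmetric] sum.distrib[symmetric]
    by (rule sum.cong) (simp_all add: algebra_simps)
  also have "\<dots> = (\<Sum>m<p - 1. c m)"
    using c_top_vanish by (simp add: q lessThan_Suc_atMost[symmetric])
  finally show ?thesis unfolding c_def .
qed

lemma second_difference_power_cmp:
  assumes "p \<ge> 1"
  shows "(real k + 1 - real l) ^ p - 2 * (real k - real l) ^ p + (real k - 1 - real l) ^ p =
    (\<Sum>m<p - 1. cmp p m k * real l ^ m)"
  unfolding second_difference_power_expansion[OF assms] cmp_def by simp

lemma deriv_loc_of_nat:
  "deriv_loc Lam p (int k) = (\<Sum>l<Suc k. ((real k + 1 - real l) ^ p - (real k - real l) ^ p) *\<^sub>R Lam l p)"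
proof -
  have "nat (int k + 1) = Suc k" by simp
  then show ?thesis unfolding deriv_loc_def by (simp add: algebra_simps)
qed

lemma deriv_loc_pred:
  "deriv_loc Lam p (int k - 1) = (\<Sum>l<k. ((real k - real l) ^ p - (real k - 1 - real l) ^ p) *\<^sub>R Lam l p)"
  unfolding deriv_loc_def by (simp add: algebra_simps)

lemma deriv_loc_0 [simp]: "deriv_loc Lam 0 k = 0"
  by (simp add: deriv_loc_def)

lemma aux_loc_pred: "aux_loc Lam p m (int k - 1) = (\<Sum>l<k. real l ^ m *\<^sub>R Lam l p)"
  by (simp add: aux_loc_def)

lemma aux_loc_step:
  "aux_loc Lam p m (int k) = aux_loc Lam p m (int k - 1) + real k ^ m *\<^sub>R Lam k p"
proof -
  have "nat (int k + 1) = Suc k" by simp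
  then show ?thesis by (simp add: aux_loc_def)
qed

lemma deriv_loc_step:
  assumes "p \<ge> 1"
  shows "deriv_loc Lam p (int k) = deriv_loc Lam p (int k - 1) + Lam k p
           + (\<Sum>m<p - 1. cmp p m k *\<^sub>R aux_loc Lam p m (int k - 1))"
proof -
  have "(\<Sum>m<p - 1. cmp p m k *\<^sub>R aux_loc Lam p m (int k - 1))
      = (\<Sum>l<k. (\<Sum>m<p - 1. cmp p m k * real l ^ m) *\<^sub>R Lam l p)"
    unfolding aux_loc_pred scaleR_sum_right scaleR_scaleR scaleR_sum_left by (rule sum.swap)
  also have "\<dots> = (\<Sum>l<k. ((real k + 1 - real l) ^ p - (real k - real l) ^ p) *\<^sub>R Lam l p)
                  - deriv_loc Lam p (int k - 1)"
    unfolding deriv_loc_pred second_difference_power_cmp[OF assms, symmetric]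
      sum_subtractf[symmetric] scaleR_diff_left[symmetric]
    by (rule sum.cong) (simp_all add: algebra_simps)
  finally show ?thesis
    using assms by (simp add: deriv_loc_of_nat power_0_left)
qed

lemma loc_coeff_distant_future:
  "loc_coeff N Lam \<mu> d T (k + \<mu> + 2) k =
     (\<Sum>l<Suc k. \<Sum>p\<le>d. ((real k + 1 - real l) ^ p * T ^ p) *\<^sub>R Lam l p)"
proof -
  have sets: "{j. j \<le> k \<and> int (k + \<mu> + 2) - int \<mu> - 1 \<le> int j \<and> int j \<le> int (k + \<mu> + 2) - 1} = {}"
             "{j. j \<le> k \<and> int j \<le> int (k + \<mu> + 2) - int \<mu> - 2} = {..<Suc k}"
    by auto
  show ?thesis unfolding loc_coeff_def sets by (simp add: algebra_simps)
qed

lemma loc_coeff_near_future_last: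
  assumes "N (k + \<mu> + 1) k = Lam k 0"
  shows "loc_coeff N Lam \<mu> d T (k + \<mu> + 1) k =
     (\<Sum>l<Suc k. \<Sum>p\<le>d. ((real k - real l) ^ p * T ^ p) *\<^sub>R Lam l p)"
proof -
  have sets: "{j. j \<le> k \<and> int (k + \<mu> + 1) - int \<mu> - 1 \<le> int j \<and> int j \<le> int (k + \<mu> + 1) - 1} = {k}"
             "{j. j \<le> k \<and> int j \<le> int (k + \<mu> + 1) - int \<mu> - 2} = {..<k}"
    by auto
  have "(\<Sum>p\<le>d. ((real k - real k) ^ p * T ^ p) *\<^sub>R Lam k p) = Lam k 0"
    by (simp add: power_0_left sum.atMost_shift)
  then show ?thesis
    unfolding loc_coeff_def sets using assms by (simp add: algebra_simps)
qed

lemma loc_coeff_step: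
  assumes "N (k + \<mu> + 1) k = Lam k 0"
  shows "loc_coeff N Lam \<mu> d T (k + \<mu> + 2) k =
     loc_coeff N Lam \<mu> d T (k + \<mu> + 1) k + (\<Sum>p\<in>{1..d}. T ^ p *\<^sub>R deriv_loc Lam p (int k))"
proof -
  have "loc_coeff N Lam \<mu> d T (k + \<mu> + 2) k - loc_coeff N Lam \<mu> d T (k + \<mu> + 1) k =
     (\<Sum>p\<le>d. \<Sum>l<Suc k. T ^ p *\<^sub>R ((real k + 1 - real l) ^ p - (real k - real l) ^ p) *\<^sub>R Lam l p)"
    unfolding loc_coeff_distant_future loc_coeff_near_future_last[where N = N and Lam = Lam, OF assms]
      sum_subtractf[symmetric] scaleR_diff_left[symmetric]
    by (subst sum.swap) (simp add: algebra_simps)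
  also have "\<dots> = (\<Sum>p\<le>d. T ^ p *\<^sub>R deriv_loc Lam p (int k))"
    by (simp add: deriv_loc_of_nat scaleR_sum_right del: sum.lessThan_Suc)
  also have "\<dots> = (\<Sum>p\<in>{1..d}. T ^ p *\<^sub>R deriv_loc Lam p (int k))"
    by (simp add: atMost_atLeast0 sum.atLeast_Suc_atMost)
  finally show ?thesis by (simp add: algebra_simps)
qed

theorem mainTheorem1:
  fixes N Lam :: "nat \<Rightarrow> nat \<Rightarrow> 'v::real_vector"
    and d \<mu> K k :: nat and T :: real
  assumes "d \<ge> 1" and "K \<ge> 2"
    and hN: "\<And>j. j \<le> K - 2 \<Longrightarrow> N (j + \<mu> + 1) j = Lam j 0"
    and k: "k \<le> K - 2"
  shows "(loc_coeff N Lam \<mu> d T (k + \<mu> + 2) k =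
           loc_coeff N Lam \<mu> d T (k + \<mu> + 1) k + (\<Sum>p\<in>{1..d}. T ^ p *\<^sub>R deriv_loc Lam p (int k)))
    \<and> (\<forall>p\<in>{1..d}. deriv_loc Lam p (int k) =
           deriv_loc Lam p (int k - 1) + Lam k p
           + (\<Sum>m<p - 1. cmp p m k *\<^sub>R aux_loc Lam p m (int k - 1)))
    \<and> (\<forall>p\<in>{2..d}. \<forall>m\<le>p - 2. aux_loc Lam p m (int k) =
           aux_loc Lam p m (int k - 1) + (real k ^ m) *\<^sub>R Lam k p)"
proof (intro conjI ballI allI impI)
  show "loc_coeff N Lam \<mu> d T (k + \<mu> + 2) k =
      loc_coeff N Lam \<mu> d T (k + \<mu> + 1) k + (\<Sum>p\<in>{1..d}. T ^ p *\<^sub>R deriv_loc Lam p (int k))"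
    using hN[OF k] by (rule loc_coeff_step)
  show "deriv_loc Lam p (int k) = deriv_loc Lam p (int k - 1) + Lam k p
      + (\<Sum>m<p - 1. cmp p m k *\<^sub>R aux_loc Lam p m (int k - 1))" if "p \<in> {1..d}" for p
    using that by (intro deriv_loc_step) simp
qed (rule aux_loc_step)

end
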